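(* Let $G=(V,E)$ be a finite undirected graph with $n=|V|$ nodes, adjacency matrix $A$, diagonal degree matrix $D$, normalized adjacency $\tilde A=D^{-1/2}(A+I)D^{-1/2}$ and normalized Laplacian $L=I-\tilde A$, with orthonormal eigendecomposition $L=\Phi\Lambda\Phi^\top$, eigenvalues $\lambda_1\le\lambda_2\le\dots\le\lambda_n$ and corresponding orthonormal eigenvectors $\phi_1,\dots,\phi_n$. Fix $T\ge 1$, $1\le K\le n-1$, a node feature matrix $X\in\mathbb R^{n\times d}$, and let $P=[\phi_2,\dots,\phi_{K+1}]\in\mathbb R^{n\times K}$. Let \[ \mathcal H^{(T)}_{\mathrm{LapPE}}=\{\tilde A^{T}[X\,|\,P]\,w:\ w\in\mathbb R^{d+K}\} \] be the class of outputs of a $T$-layer linearized GCN whose input features are augmented with $P$. If $(1-\lambda_k)^T\neq 0$ for all $k=2,\dots,K+1$, then for every label signal $y\in\mathbb R^n$, \[ \min_{\hat y\in\mathcal H^{(T)}_{\mathrm{LapPE}}}\|y-\hat y\|_2\;\le\;\bigl\|y-\Pi_{\mathrm{span}(\phi_2,\dots,\phi_{K+1})}\,y\bigr\|_2, \] where $\Pi_S$ denotes orthogonal projection onto the subspace $S$.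
   Context: A linearized $T$-layer GCN computes $\tilde A^T H^{(0)}W^{(1)}\cdots W^{(T)}$; with scalar output and sufficiently wide layers the product of weight matrices is an arbitrary vector $w$, giving the hypothesis class above. *)

theory Defs
  imports "HOL-Analysis.Analysis"
begin

text \<open>Graph on the finite vertex type 'n, given by a symmetric irreflexive edge relation E.\<close>

definition adj_matrix :: "('n::finite \<Rightarrow> 'n \<Rightarrow> bool) \<Rightarrow> real^'n^'n" where
  "adj_matrix E = (\<chi> i j. if E i j then 1 else 0)"

definition degree :: "('n::finite \<Rightarrow> 'n \<Rightarrow> bool) \<Rightarrow> 'n \<Rightarrow> real" where
  "degree E i = real (card {j. E i j})"

text \<open>D^(-1/2), with the convention inverse 0 = 0 for isolated vertices.\<close>
definition deg_inv_sqrt :: "('n::finite \<Rightarrow> 'n \<Rightarrow> bool) \<Rightarrow> real^'n^'n" where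
  "deg_inv_sqrt E = (\<chi> i j. if i = j then inverse (sqrt (degree E i)) else 0)"

definition norm_adj :: "('n::finite \<Rightarrow> 'n \<Rightarrow> bool) \<Rightarrow> real^'n^'n" where
  "norm_adj E = deg_inv_sqrt E ** (adj_matrix E + mat 1) ** deg_inv_sqrt E"

definition norm_lap :: "('n::finite \<Rightarrow> 'n \<Rightarrow> bool) \<Rightarrow> real^'n^'n" where
  "norm_lap E = mat 1 - norm_adj E"

fun mat_pow :: "real^'n::finite^'n \<Rightarrow> nat \<Rightarrow> real^'n^'n" where
  "mat_pow M 0 = mat 1"
| "mat_pow M (Suc k) = M ** mat_pow M k"

definition orth_proj :: "'a::real_inner set \<Rightarrow> 'a \<Rightarrow> 'a" where
  "orth_proj S y = (THE p. p \<in> S \<and> (\<forall>s\<in>S. inner (y - p) s = 0))"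

text \<open>Hypothesis class of the T-layer linearized GCN with input [X | P], where X has d
  columns X 0, ..., X (d-1) and P = [phi 2, ..., phi (K+1)].\<close>
definition H_LapPE ::
  "real^'n::finite^'n \<Rightarrow> nat \<Rightarrow> nat \<Rightarrow> (nat \<Rightarrow> real^'n) \<Rightarrow> nat \<Rightarrow> (nat \<Rightarrow> real^'n) \<Rightarrow> (real^'n) set" where
  "H_LapPE At T d X K phi =
     {mat_pow At T *v ((\<Sum>j<d. a j *\<^sub>R X j) + (\<Sum>k\<in>{2..K+1}. c k *\<^sub>R phi k)) | a c. True}"

end

theory Submission
  imports Defs
begin

(* Since norm_adj E = I - norm_lap E, each phi k is an eigenvector of norm_adj E ^ T with
   eigenvalue (1 - lam k) ^ T; when this is nonzero, phi k = norm_adj E ^ T ((1 - lam k) ^ -T phi k)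
   is an output of the network.  The hypothesis class is a linear image of a span, hence a closed
   subspace, so it contains span (phi 2, ..., phi (K+1)) and with it the projection of y. *)

lemma orth_proj_eqI:
  fixes S :: "'a::real_inner set"
  assumes "subspace S" and "p \<in> S" and "\<And>s. s \<in> S \<Longrightarrow> inner (y - p) s = 0"
  shows "orth_proj S y = p"
  unfolding orth_proj_def
proof (rule the_equality)
  show "p \<in> S \<and> (\<forall>s\<in>S. inner (y - p) s = 0)" using assms(2,3) by blast
next
  fix q assume q: "q \<in> S \<and> (\<forall>s\<in>S. inner (y - q) s = 0)"
  have "q - p \<in> S" using q assms(1,2) by (simp add: subspace_diff)
  then have "inner (y - p) (q - p) = 0" "inner (y - q) (q - p) = 0" using assms(3) q by auto
  then have "inner (q - p) (q - p) = 0" by (simp add: inner_diff_left inner_diff_right)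
  then show "q = p" by simp
qed

lemma orth_proj_span_mem:
  fixes B :: "'a::euclidean_space set"
  shows "orth_proj (span B) y \<in> span B"
proof -
  obtain p z where p: "p \<in> span B" and z: "\<And>w. w \<in> span B \<Longrightarrow> orthogonal z w"
    and y: "y = p + z"
    using orthogonal_subspace_decomp_exists[of B y] by blast
  have "orth_proj (span B) y = p"
    using z by (intro orth_proj_eqI subspace_span p) (simp add: y orthogonal_def)
  with p show ?thesis by simp
qed

lemma subspace_best_approximation:
  fixes S :: "'a::euclidean_space set"
  assumes "subspace S"
  obtains p where "p \<in> S" and "\<And>z. z \<in> S \<Longrightarrow> norm (y - p) \<le> norm (y - z)"
proof -
  have "closed S" "S \<noteq> {}" using assms by (auto intro: closed_subspace subspace_0)
  then show ?thesis
    using distance_attains_inf[of S y] that by (metis dist_norm)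
qed

lemma range_sum_scaleR_eq_span:
  fixes v :: "'i \<Rightarrow> 'a::real_vector"
  assumes "finite I"
  shows "range (\<lambda>c. \<Sum>i\<in>I. c i *\<^sub>R v i) = span (v ` I)"
  using assms
proof (induction I rule: finite_induct)
  case empty
  then show ?case by simp
next
  case (insert i I)
  show ?case
  proof (intro equalityI subsetI)
    fix x assume "x \<in> range (\<lambda>c. \<Sum>j\<in>insert i I. c j *\<^sub>R v j)"
    then show "x \<in> span (v ` insert i I)"
      by (auto intro!: span_sum span_scale intro: span_base)
  next
    fix x assume "x \<in> span (v ` insert i I)"
    then obtain k where "x - k *\<^sub>R v i \<in> span (v ` I)"
      by (auto simp: span_insert)
    then obtain c where c: "x - k *\<^sub>R v i = (\<Sum>j\<in>I. c j *\<^sub>R v j)"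
      using insert.IH by blast
    have "(\<Sum>j\<in>I. (c(i := k)) j *\<^sub>R v j) = (\<Sum>j\<in>I. c j *\<^sub>R v j)"
      using insert.hyps(2) by (intro sum.cong) auto
    then have "x = (\<Sum>j\<in>insert i I. (c(i := k)) j *\<^sub>R v j)"
      using insert.hyps c by (simp add: algebra_simps)
    then show "x \<in> range (\<lambda>c. \<Sum>j\<in>insert i I. c j *\<^sub>R v j)" by blast
  qed
qed

lemma H_LapPE_eq_image_span:
  "H_LapPE At T d X K phi = (*v) (mat_pow At T) ` span (X ` {..<d} \<union> phi ` {2..K+1})"
proof -
  have span_eq: "span (X ` {..<d} \<union> phi ` {2..K+1})
      = {(\<Sum>j<d. a j *\<^sub>R X j) + (\<Sum>k\<in>{2..K+1}. c k *\<^sub>R phi k) | a c. True}"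
    unfolding span_Un range_sum_scaleR_eq_span[symmetric, OF finite_lessThan]
      range_sum_scaleR_eq_span[symmetric, OF finite_atLeastAtMost]
    by blast
  show ?thesis
    unfolding H_LapPE_def span_eq by blast
qed

lemma subspace_H_LapPE: "subspace (H_LapPE At T d X K phi)"
  unfolding H_LapPE_eq_image_span
  by (intro linear_subspace_image matrix_vector_mul_linear subspace_span)

lemma eigenvector_mem_H_LapPE:
  assumes "mat_pow At T *v phi k = mu *\<^sub>R phi k" and "mu \<noteq> 0" and "k \<in> {2..K+1}"
  shows "phi k \<in> H_LapPE At T d X K phi"
proof -
  have "phi k = mat_pow At T *v (inverse mu *\<^sub>R phi k)"
    using assms(1,2) by (simp add: matrix_vector_mult_scaleR)
  moreover have "inverse mu *\<^sub>R phi k \<in> span (X ` {..<d} \<union> phi ` {2..K+1})"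
    using assms(3) by (intro span_scale span_base) simp
  ultimately show ?thesis
    unfolding H_LapPE_eq_image_span by blast
qed

lemma mat_pow_eigenvector:
  assumes "M *v v = m *\<^sub>R v"
  shows "mat_pow M t *v v = (m ^ t) *\<^sub>R v"
proof (induction t)
  case 0
  then show ?case by simp
next
  case (Suc t)
  have "mat_pow M (Suc t) *v v = M *v (mat_pow M t *v v)"
    by (simp add: matrix_vector_mul_assoc)
  also have "\<dots> = (m ^ Suc t) *\<^sub>R v"
    using Suc assms by (simp add: matrix_vector_mult_scaleR)
  finally show ?case .
qed

lemma norm_adj_eigenvector:
  assumes "norm_lap E *v v = lam *\<^sub>R v"
  shows "norm_adj E *v v = (1 - lam) *\<^sub>R v"
proof -
  have "norm_adj E = mat 1 - norm_lap E" by (simp add: norm_lap_def)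
  then show ?thesis
    using assms by (simp add: matrix_vector_mult_diff_rdistrib scaleR_diff_left)
qed

theorem proposition3p3:
  fixes E :: "'n::finite \<Rightarrow> 'n \<Rightarrow> bool"
    and lam :: "nat \<Rightarrow> real"
    and phi :: "nat \<Rightarrow> real^'n"
    and T d K :: nat
    and X :: "nat \<Rightarrow> real^'n"
    and y :: "real^'n"
  assumes sym: "\<And>i j. E i j \<longleftrightarrow> E j i"
    and irrefl: "\<And>i. \<not> E i i"
    and orthonormal: "\<And>i j. i \<in> {1..CARD('n)} \<Longrightarrow> j \<in> {1..CARD('n)} \<Longrightarrow>
                         inner (phi i) (phi j) = (if i = j then 1 else 0)"
    and eigen: "\<And>k. k \<in> {1..CARD('n)} \<Longrightarrow> norm_lap E *v phi k = lam k *\<^sub>R phi k"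
    and sorted: "\<And>i j. 1 \<le> i \<Longrightarrow> i \<le> j \<Longrightarrow> j \<le> CARD('n) \<Longrightarrow> lam i \<le> lam j"
    and T: "T \<ge> 1"
    and K: "1 \<le> K" "K \<le> CARD('n) - 1"
    and nonzero: "\<And>k. k \<in> {2..K+1} \<Longrightarrow> (1 - lam k) ^ T \<noteq> 0"
  shows "\<exists>yh \<in> H_LapPE (norm_adj E) T d X K phi.
           (\<forall>z \<in> H_LapPE (norm_adj E) T d X K phi. norm (y - yh) \<le> norm (y - z)) \<and>
           norm (y - yh) \<le> norm (y - orth_proj (span (phi ` {2..K+1})) y)"
proof -
  let ?H = "H_LapPE (norm_adj E) T d X K phi"
  have "phi k \<in> ?H" if k: "k \<in> {2..K+1}" for k
  proof (rule eigenvector_mem_H_LapPE[OF _ nonzero[OF k] k])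
    have "k \<in> {1..CARD('n)}" using k K by auto
    then show "mat_pow (norm_adj E) T *v phi k = (1 - lam k) ^ T *\<^sub>R phi k"
      by (intro mat_pow_eigenvector norm_adj_eigenvector eigen)
  qed
  then have "span (phi ` {2..K+1}) \<subseteq> ?H"
    using subspace_H_LapPE by (intro span_minimal) auto
  then have proj: "orth_proj (span (phi ` {2..K+1})) y \<in> ?H"
    using orth_proj_span_mem by blast
  obtain yh where "yh \<in> ?H" and "\<And>z. z \<in> ?H \<Longrightarrow> norm (y - yh) \<le> norm (y - z)"
    using subspace_best_approximation[OF subspace_H_LapPE] by blast
  with proj show ?thesis by blast
qed

end
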